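(* Let $G$ be a finite simple graph with a perfect matching $M$ and let $\mathcal{C}$ be an optimal edge $2$-colouring of $G$. Let $\mathcal{C}_M$ be the set of colours used on edges of $M$. For each $j\in\mathcal{C}_M$ let $S_j\subseteq V(G)$ be an $M$-monochromatic set such that the edges of $M$ incident with vertices of $S_j$ are coloured $j$. Then $$|\mathcal{C}_M|\le |M|-\sum_{j\in\mathcal{C}_M}\mathrm{rp}(S_j).$$
   Context: An edge $2$-colouring assigns colours to edges (not necessarily properly) so that each vertex sees at most $2$ distinct colours; optimal means it uses the maximum number of colours. A set $S\subseteq V(G)$ is $M$-monochromatic if all edges of $M$ incident with vertices of $S$ have the same colour. $i(S;M)$ denotes the number of edges of $M$ incident with a vertex of $S$, and the repetition content of an $M$-monochromatic set $S$ is $\mathrm{rp}(S):=i(S;M)-1$. *)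

theory Defs
  imports Main
begin

definition simple_graph :: "'a set \<Rightarrow> 'a set set \<Rightarrow> bool" where
  "simple_graph V E \<longleftrightarrow> finite V \<and>
     (\<forall>e\<in>E. \<exists>u v. e = {u, v} \<and> u \<noteq> v \<and> u \<in> V \<and> v \<in> V)"

definition perfect_matching :: "'a set \<Rightarrow> 'a set set \<Rightarrow> 'a set set \<Rightarrow> bool" where
  "perfect_matching V E M \<longleftrightarrow> M \<subseteq> E \<and> (\<forall>v\<in>V. \<exists>!e. e \<in> M \<and> v \<in> e)"

definition edge_2_colouring :: "'a set \<Rightarrow> 'a set set \<Rightarrow> ('a set \<Rightarrow> 'c) \<Rightarrow> bool" where
  "edge_2_colouring V E c \<longleftrightarrow> (\<forall>v\<in>V. card (c ` {e \<in> E. v \<in> e}) \<le> 2)"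

text \<open>Optimal: uses the maximum number of colours over all edge 2-colourings
  (competitors use natural-number colours, which loses no generality since E is finite).\<close>
definition optimal_edge_2_colouring :: "'a set \<Rightarrow> 'a set set \<Rightarrow> ('a set \<Rightarrow> 'c) \<Rightarrow> bool" where
  "optimal_edge_2_colouring V E c \<longleftrightarrow> edge_2_colouring V E c \<and>
     (\<forall>c' :: 'a set \<Rightarrow> nat. edge_2_colouring V E c' \<longrightarrow> card (c' ` E) \<le> card (c ` E))"

definition inc :: "'a set \<Rightarrow> 'a set set \<Rightarrow> nat" where
  "inc S M = card {e \<in> M. e \<inter> S \<noteq> {}}"

definition M_mono_col :: "'a set set \<Rightarrow> ('a set \<Rightarrow> 'c) \<Rightarrow> 'c \<Rightarrow> 'a set \<Rightarrow> bool" where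
  "M_mono_col M c j S \<longleftrightarrow> (\<forall>e\<in>M. e \<inter> S \<noteq> {} \<longrightarrow> c e = j)"

definition rp :: "'a set set \<Rightarrow> 'a set \<Rightarrow> int" where
  "rp M S = int (inc S M) - 1"

end

theory Submission
  imports Defs
begin

text \<open>The sets of \<open>M\<close>-edges incident with \<open>S\<^sub>j\<close> are pairwise disjoint, since an edge in two
  of them would carry two colours. Hence the \<open>i(S\<^sub>j; M)\<close> sum to at most \<open>|M|\<close>, and subtracting
  one for each colour of \<open>\<C>\<^sub>M\<close> gives the bound.\<close>

lemma finite_matching:
  assumes "simple_graph V E" and "perfect_matching V E M"
  shows "finite M"
proof -
  have "E \<subseteq> Pow V" "finite V"
    using assms(1) by (auto simp: simple_graph_def)
  then have "finite E"
    by (meson finite_Pow_iff finite_subset)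
  then show ?thesis
    using assms(2) finite_subset by (auto simp: perfect_matching_def)
qed

lemma M_mono_col_incident_disjoint:
  assumes "M_mono_col M c i S" and "M_mono_col M c j T" and "i \<noteq> j"
  shows "{e \<in> M. e \<inter> S \<noteq> {}} \<inter> {e \<in> M. e \<inter> T \<noteq> {}} = {}"
  using assms by (auto simp: M_mono_col_def)

lemma sum_inc_M_mono_col_le_card:
  assumes "finite M" and "finite J" and "\<forall>j\<in>J. M_mono_col M c j (S j)"
  shows "(\<Sum>j\<in>J. inc (S j) M) \<le> card M"
proof -
  define A where "A j = {e \<in> M. e \<inter> S j \<noteq> {}}" for j
  have "(\<Sum>j\<in>J. inc (S j) M) = (\<Sum>j\<in>J. card (A j))"
    by (simp add: inc_def A_def)
  also have "\<dots> = card (\<Union>j\<in>J. A j)"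
    using assms unfolding A_def
    by (intro card_UN_disjoint [symmetric] ballI impI M_mono_col_incident_disjoint) auto
  also have "\<dots> \<le> card M"
    using assms(1) by (intro card_mono) (auto simp: A_def)
  finally show ?thesis .
qed

lemma sum_rp_eq:
  assumes "finite J"
  shows "(\<Sum>j\<in>J. rp M (S j)) = int (\<Sum>j\<in>J. inc (S j) M) - int (card J)"
  using assms by (simp add: rp_def sum_subtractf)

theorem lemma7:
  fixes V :: "'a set" and E M :: "'a set set" and c :: "'a set \<Rightarrow> 'c"
    and S :: "'c \<Rightarrow> 'a set"
  assumes "simple_graph V E"
    and "perfect_matching V E M"
    and "optimal_edge_2_colouring V E c"
    and "\<forall>j\<in>c ` M. S j \<subseteq> V \<and> M_mono_col M c j (S j)"
  shows "int (card (c ` M)) \<le> int (card M) - (\<Sum>j\<in>c ` M. rp M (S j))"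
proof -
  have "finite M"
    using assms(1,2) by (rule finite_matching)
  then have "(\<Sum>j\<in>c ` M. inc (S j) M) \<le> card M"
    using assms(4) by (intro sum_inc_M_mono_col_le_card) auto
  moreover have "(\<Sum>j\<in>c ` M. rp M (S j)) = int (\<Sum>j\<in>c ` M. inc (S j) M) - int (card (c ` M))"
    using \<open>finite M\<close> by (intro sum_rp_eq) simp
  ultimately show ?thesis
    by linarith
qed

end
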